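(* Let $a=(a_k)_{k=0}^{d-1}\in\mathbb C^d$. Then for every $t\in(0,1)$ there exists at least one $n\in\{0,1,\dots,d-1\}$ such that $|a_n|\ge\|a\|_1\,t^{d-n}(t^{-1}-1)$.
   Context: $\|a\|_1=\sum_{k=0}^{d-1}|a_k|$. *)

theory Defs
  imports Complex_Main
begin

definition norm1 :: "nat \<Rightarrow> (nat \<Rightarrow> complex) \<Rightarrow> real" where
  "norm1 d a = (\<Sum>k<d. cmod (a k))"

end

theory Submission
  imports Defs
begin

text \<open>The weights \<open>w n = t ^ (d - n) * (1/t - 1)\<close> are a telescoping geometric sum totalling
  \<open>1 - t ^ d < 1\<close>. If every \<open>\<bar>a n\<bar>\<close> fell below \<open>\<parallel>a\<parallel>\<^sub>1 * w n\<close>, summing would give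
  \<open>\<parallel>a\<parallel>\<^sub>1 < \<parallel>a\<parallel>\<^sub>1 * (1 - t ^ d) \<le> \<parallel>a\<parallel>\<^sub>1\<close>.\<close>

lemma sum_power_diff_times_inverse_minus_one:
  fixes t :: "'a :: field"
  assumes "t \<noteq> 0"
  shows "(\<Sum>n<d. t ^ (d - n)) * (1 / t - 1) = 1 - t ^ d"
proof (induction d)
  case 0
  then show ?case by simp
next
  case (Suc d)
  have "(\<Sum>n<Suc d. t ^ (Suc d - n)) = t * (\<Sum>n<d. t ^ (d - n)) + t"
    by (simp add: sum_distrib_left Suc_diff_le power_Suc[symmetric] del: power_Suc)
  then have "(\<Sum>n<Suc d. t ^ (Suc d - n)) * (1 / t - 1)
      = t * ((\<Sum>n<d. t ^ (d - n)) * (1 / t - 1)) + (1 - t)"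
    using assms by (simp add: algebra_simps)
  also have "\<dots> = 1 - t ^ Suc d"
    by (simp only: Suc.IH) (simp add: algebra_simps)
  finally show ?case .
qed

lemma norm1_nonneg: "norm1 d a \<ge> 0"
  by (simp add: norm1_def sum_nonneg)

lemma exists_coeff_ge_norm1_weight:
  assumes "d \<ge> 1" and "(\<Sum>n<d. w n) \<le> 1"
  shows "\<exists>n<d. cmod (a n) \<ge> norm1 d a * w n"
proof (rule ccontr)
  assume "\<not> ?thesis"
  then have below: "cmod (a n) < norm1 d a * w n" if "n < d" for n
    using that by force
  have "norm1 d a = (\<Sum>n<d. cmod (a n))"
    by (simp add: norm1_def)
  also have "\<dots> < (\<Sum>n<d. norm1 d a * w n)"
    using assms(1) below by (intro sum_strict_mono) (auto simp: lessThan_empty_iff)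
  also have "\<dots> = norm1 d a * (\<Sum>n<d. w n)"
    by (simp add: sum_distrib_left)
  also have "\<dots> \<le> norm1 d a"
    using assms(2) norm1_nonneg by (simp add: mult_left_le)
  finally show False by simp
qed

theorem mainTheorem7:
  fixes d :: nat and a :: "nat \<Rightarrow> complex" and t :: real
  assumes "d \<ge> 1" and "0 < t" and "t < 1"
  shows "\<exists>n<d. cmod (a n) \<ge> norm1 d a * t ^ (d - n) * (1 / t - 1)"
proof -
  have "(\<Sum>n<d. t ^ (d - n) * (1 / t - 1)) = 1 - t ^ d"
    using sum_power_diff_times_inverse_minus_one[of t d] assms(2)
    by (simp add: sum_distrib_right)
  also have "\<dots> \<le> 1"
    using assms(2) by simp
  finally show ?thesis
    using exists_coeff_ge_norm1_weight[OF assms(1)] by (simp add: mult.assoc)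
qed

end
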